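(* Let $k\ge 3$, let $C_{2k}=v_1v_2\cdots v_{2k}v_1$ be a cycle, let $i,j$ be integers with $4<i<j\le 2k$, and let $n_i,n_j\ge 0$ be integers. Let $G$ be the graph on $n=2k+n_i+n_j$ vertices obtained from $C_{2k}$ and two stars $S_{n_i+1}$, $S_{n_j+1}$ by identifying $v_i$ with the center of $S_{n_i+1}$ and $v_j$ with the center of $S_{n_j+1}$ (i.e. attaching $n_i$ pendant vertices at $v_i$ and $n_j$ pendant vertices at $v_j$). Let $G'=G-v_1v_2+v_1v_4$. Then $$\operatorname{per} L(G)>\operatorname{per} L(G').$$
   Context: For a simple graph $G$, $L(G)=D(G)-A(G)$ is its Laplacian matrix, where $D(G)$ is the diagonal matrix of vertex degrees and $A(G)$ the adjacency matrix. The permanent of an $n\times n$ matrix $X=(x_{ij})$ is $\operatorname{per} X=\sum_{\sigma\in S_n}\prod_{t=1}^n x_{t\sigma(t)}$. $S_m$ denotes the star on $m$ vertices (so $S_1$ is a single vertex). $G-e$ / $G+e$ denote deletion / addition of an edge $e$. *)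

theory Defs
  imports "HOL-Combinatorics.Permutations"
begin

text \<open>Simple graphs are given by a vertex set V (a finite set of naturals) and an
edge set E of two-element subsets of V.\<close>

definition laplacian :: "nat set set \<Rightarrow> nat \<Rightarrow> nat \<Rightarrow> int" where
  "laplacian E a b =
     (if a = b then int (card {e \<in> E. a \<in> e})
      else if {a, b} \<in> E then -1 else 0)"

definition per :: "nat set \<Rightarrow> (nat \<Rightarrow> nat \<Rightarrow> int) \<Rightarrow> int" where
  "per V X = (\<Sum>\<sigma> | \<sigma> permutes V. \<Prod>t\<in>V. X t (\<sigma> t))"

text \<open>The cycle C_{2k} = v_1 v_2 ... v_{2k} v_1 with v_a represented by the natural a.\<close>
definition cycle_edges :: "nat \<Rightarrow> nat set set" where
  "cycle_edges k = {{a, a + 1} | a. 1 \<le> a \<and> a < 2 * k} \<union> {{2 * k, 1}}"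

text \<open>n_i pendant vertices 2k+1..2k+n_i at v_i, and n_j pendant vertices
2k+n_i+1..2k+n_i+n_j at v_j.\<close>
definition G_edges :: "nat \<Rightarrow> nat \<Rightarrow> nat \<Rightarrow> nat \<Rightarrow> nat \<Rightarrow> nat set set" where
  "G_edges k i j ni nj = cycle_edges k
     \<union> {{i, 2 * k + t} | t. 1 \<le> t \<and> t \<le> ni}
     \<union> {{j, 2 * k + ni + t} | t. 1 \<le> t \<and> t \<le> nj}"

definition G_vertices :: "nat \<Rightarrow> nat \<Rightarrow> nat \<Rightarrow> nat set" where
  "G_vertices k ni nj = {1 .. 2 * k + ni + nj}"

end

theory Submission
  imports Defs "HOL-Combinatorics.Cycles"
begin

text \<open>
  Let \<open>W\<close> be the vertex set without \<open>v\<^sub>2, v\<^sub>3\<close> and \<open>p(U)\<close> the permanent of the principal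
  submatrix of \<open>L(G)\<close> on \<open>U\<close>. In \<open>G'\<close> the vertex \<open>v\<^sub>2\<close> is a leaf at \<open>v\<^sub>3\<close>, and once it is removed
  \<open>v\<^sub>3\<close> is a leaf at \<open>v\<^sub>4\<close>. Expanding at these leaves, and observing that on \<open>W\<close> the Laplacian of
  \<open>G'\<close> arises from that of \<open>G\<close> by inserting the edge \<open>v\<^sub>1v\<^sub>4\<close>, gives the exact value
  \<open>per L(G') = 3 p(W) + 4 p(W - v\<^sub>4) + 3 p(W - {v\<^sub>1, v\<^sub>4}) + 6\<close>, where the constant comes from the
  two orientations of the only cycle through the new edge, \<open>v\<^sub>1v\<^sub>4v\<^sub>5\<dots>v\<^sub>2\<^sub>k\<close>.
  Since \<open>G\<close> is bipartite, every term of \<open>per L(G)\<close> is nonnegative, so keeping only the permutations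
  that fix or swap vertices around \<open>v\<^sub>2, v\<^sub>3\<close> bounds it from below by
  \<open>5 p(W) + 2 p(W - v\<^sub>4) + 2 p(W - v\<^sub>1) + p(W - {v\<^sub>1, v\<^sub>4})\<close>. One more such expansion at \<open>v\<^sub>4\<close>,
  together with \<open>p(U) \<ge> 1\<close> (the diagonal term alone), shows that this exceeds \<open>per L(G')\<close>.
\<close>

section \<open>Permanents as sums over classes of permutations\<close>

definition perms_extending :: "'a set \<Rightarrow> 'a set \<Rightarrow> ('a \<Rightarrow> 'a) \<Rightarrow> ('a \<Rightarrow> 'a) set" where
  "perms_extending S C \<rho> = {\<sigma>. \<sigma> permutes S \<and> (\<forall>c\<in>C. \<sigma> c = \<rho> c)}"

lemma perms_extending_subset: "perms_extending S C \<rho> \<subseteq> {\<sigma>. \<sigma> permutes S}"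
  by (auto simp: perms_extending_def)

lemma finite_perms_extending: "finite S \<Longrightarrow> finite (perms_extending S C \<rho>)"
  using finite_subset[OF perms_extending_subset finite_permutations] by blast

lemma sum_perms_extending:
  fixes X :: "nat \<Rightarrow> nat \<Rightarrow> int"
  assumes "finite S" and "C \<subseteq> S" and \<rho>: "\<rho> permutes C"
  shows "(\<Sum>\<sigma>\<in>perms_extending S C \<rho>. \<Prod>t\<in>S. X t (\<sigma> t))
       = (\<Prod>c\<in>C. X c (\<rho> c)) * per (S - C) X"
proof -
  have \<rho>S: "\<rho> permutes S" using permutes_subset[OF \<rho> \<open>C \<subseteq> S\<close>] .
  have "(\<Sum>\<sigma>\<in>perms_extending S C \<rho>. \<Prod>t\<in>S. X t (\<sigma> t))
      = (\<Sum>\<tau> | \<tau> permutes (S - C). \<Prod>t\<in>S. X t (\<tau> (\<rho> t)))"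
  proof (rule sum.reindex_bij_witness[where i = "\<lambda>\<tau>. \<tau> \<circ> \<rho>" and j = "\<lambda>\<sigma>. \<sigma> \<circ> inv \<rho>"])
    fix \<sigma> assume "\<sigma> \<in> perms_extending S C \<rho>"
    then have \<sigma>: "\<sigma> permutes S" "\<And>c. c \<in> C \<Longrightarrow> \<sigma> c = \<rho> c"
      by (auto simp: perms_extending_def)
    show "\<sigma> \<circ> inv \<rho> \<circ> \<rho> = \<sigma>"
      by (simp add: comp_assoc permutes_inv_o(2)[OF \<rho>])
    have "\<sigma> (inv \<rho> x) = x" if "x \<in> C" for x
      using \<sigma>(2)[of "inv \<rho> x"] permutes_in_image[OF permutes_inv[OF \<rho>]] that
        permutes_inverses(1)[OF \<rho>] by simp
    then have "\<sigma> \<circ> inv \<rho> permutes (S - C)"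
      using permutes_compose[OF permutes_inv[OF \<rho>S] \<sigma>(1)] by (auto intro: permutes_superset)
    then show "\<sigma> \<circ> inv \<rho> \<in> {\<tau>. \<tau> permutes (S - C)}" by simp
  next
    fix \<tau> assume "\<tau> \<in> {\<tau>. \<tau> permutes (S - C)}"
    then have \<tau>: "\<tau> permutes (S - C)" by simp
    show "\<tau> \<circ> \<rho> \<circ> inv \<rho> = \<tau>"
      by (simp add: comp_assoc permutes_inv_o(1)[OF \<rho>])
    have "\<tau> (\<rho> c) = \<rho> c" if "c \<in> C" for c
      using permutes_not_in[OF \<tau>] permutes_in_image[OF \<rho>] that by simp
    moreover have "\<tau> \<circ> \<rho> permutes S"
      using permutes_compose[OF \<rho>S permutes_subset[OF \<tau>]] by blast
    ultimately show "\<tau> \<circ> \<rho> \<in> perms_extending S C \<rho>"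
      by (simp add: perms_extending_def)
  qed (simp add: permutes_inverses(2)[OF \<rho>])
  also have "\<dots> = (\<Sum>\<tau> | \<tau> permutes (S - C). (\<Prod>c\<in>C. X c (\<rho> c)) * (\<Prod>t\<in>S - C. X t (\<tau> t)))"
  proof (rule sum.cong[OF refl])
    fix \<tau> assume "\<tau> \<in> {\<tau>. \<tau> permutes (S - C)}"
    then have \<tau>: "\<tau> permutes (S - C)" by simp
    have "(\<Prod>t\<in>S. X t (\<tau> (\<rho> t))) = (\<Prod>t\<in>S - C. X t (\<tau> (\<rho> t))) * (\<Prod>t\<in>C. X t (\<tau> (\<rho> t)))"
      using prod.subset_diff[OF \<open>C \<subseteq> S\<close> \<open>finite S\<close>] by simp
    also have "\<dots> = (\<Prod>t\<in>S - C. X t (\<tau> t)) * (\<Prod>c\<in>C. X c (\<rho> c))"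
      using permutes_not_in[OF \<rho>] permutes_not_in[OF \<tau>] permutes_in_image[OF \<rho>]
      by (intro arg_cong2[where f = "(*)"] prod.cong) auto
    finally show "(\<Prod>t\<in>S. X t (\<tau> (\<rho> t))) = (\<Prod>c\<in>C. X c (\<rho> c)) * (\<Prod>t\<in>S - C. X t (\<tau> t))"
      by simp
  qed
  also have "\<dots> = (\<Prod>c\<in>C. X c (\<rho> c)) * per (S - C) X"
    by (simp add: per_def sum_distrib_left)
  finally show ?thesis .
qed

lemma per_cong:
  assumes "\<And>a b. a \<in> S \<Longrightarrow> b \<in> S \<Longrightarrow> X a b = Y a b"
  shows "per S X = per S Y"
  unfolding per_def
  by (intro sum.cong refl prod.cong) (auto simp: assms permutes_in_image)

lemma per_subset_sum_le:
  fixes X :: "nat \<Rightarrow> nat \<Rightarrow> int"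
  assumes "finite S" and "\<And>\<sigma>. \<sigma> permutes S \<Longrightarrow> 0 \<le> (\<Prod>t\<in>S. X t (\<sigma> t))"
    and "P \<subseteq> {\<sigma>. \<sigma> permutes S}"
  shows "(\<Sum>\<sigma>\<in>P. \<Prod>t\<in>S. X t (\<sigma> t)) \<le> per S X"
  unfolding per_def
  by (rule sum_mono2[OF finite_permutations[OF \<open>finite S\<close>] assms(3)]) (use assms(2) in auto)

lemma prod_diag_le_per:
  fixes X :: "nat \<Rightarrow> nat \<Rightarrow> int"
  assumes "finite S" and "\<And>\<sigma>. \<sigma> permutes S \<Longrightarrow> 0 \<le> (\<Prod>t\<in>S. X t (\<sigma> t))"
  shows "(\<Prod>t\<in>S. X t t) \<le> per S X"
  using per_subset_sum_le[OF assms, where P = "{id}"] by simp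

lemma per_diagonal:
  fixes X :: "nat \<Rightarrow> nat \<Rightarrow> int"
  assumes "finite S" and "\<And>a b. a \<in> S \<Longrightarrow> b \<in> S \<Longrightarrow> a \<noteq> b \<Longrightarrow> X a b = 0"
  shows "per S X = (\<Prod>t\<in>S. X t t)"
proof -
  have "(\<Prod>t\<in>S. X t (\<sigma> t)) = 0" if "\<sigma> permutes S" "\<sigma> \<noteq> id" for \<sigma>
  proof -
    obtain t where "\<sigma> t \<noteq> t" using \<open>\<sigma> \<noteq> id\<close> by (auto simp: fun_eq_iff)
    moreover have "t \<in> S" "\<sigma> t \<in> S"
      using calculation permutes_not_in[OF that(1)] permutes_in_image[OF that(1)] by blast+
    ultimately show ?thesis using assms by (metis prod_zero_iff)
  qed
  then have "per S X = (\<Sum>\<sigma>\<in>{id}. \<Prod>t\<in>S. X t (\<sigma> t))"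
    unfolding per_def
    by (intro sum.mono_neutral_right finite_permutations assms(1)) auto
  then show ?thesis by simp
qed

lemma prod_perm_nonneg_if_bipartite:
  fixes X :: "nat \<Rightarrow> nat \<Rightarrow> int" and colour :: "nat \<Rightarrow> bool"
  assumes "finite S" and \<sigma>: "\<sigma> permutes S"
    and diag: "\<And>a. 0 \<le> X a a"
    and off_diag: "\<And>a b. a \<noteq> b \<Longrightarrow> X a b \<le> 0"
    and bipartite: "\<And>a b. a \<noteq> b \<Longrightarrow> X a b \<noteq> 0 \<Longrightarrow> colour a \<noteq> colour b"
  shows "0 \<le> (\<Prod>t\<in>S. X t (\<sigma> t))"
proof (cases "\<exists>t\<in>S. X t (\<sigma> t) = 0")
  case True
  then show ?thesis using \<open>finite S\<close> by (metis prod_zero_iff order_refl)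
next
  case False
  define N0 where "N0 = {t\<in>S. \<sigma> t \<noteq> t \<and> colour t}"
  define N1 where "N1 = {t\<in>S. \<sigma> t \<noteq> t \<and> \<not> colour t}"
  have inj: "inj \<sigma>" using permutes_inj[OF \<sigma>] .
  have moved: "\<sigma> t \<in> S \<and> \<sigma> (\<sigma> t) \<noteq> \<sigma> t \<and> colour (\<sigma> t) \<noteq> colour t"
    if "t \<in> S" "\<sigma> t \<noteq> t" for t
    using that False bipartite[of t "\<sigma> t"] permutes_in_image[OF \<sigma>] inj_eq[OF inj] by auto
  have "\<sigma> ` N0 \<subseteq> N1" "\<sigma> ` N1 \<subseteq> N0"
    using moved by (auto simp: N0_def N1_def)
  moreover have "finite N0" "finite N1" using \<open>finite S\<close> by (auto simp: N0_def N1_def)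
  ultimately have "\<sigma> ` N0 = N1"
    using card_image[OF inj_on_subset[OF inj]] card_mono
    by (metis card_seteq subset_UNIV)
  then have bij: "bij_betw \<sigma> N0 N1" using inj_on_subset[OF inj] by (auto simp: bij_betw_def)
  \<comment> \<open>the moved points pair up as \<open>t, \<sigma> t\<close>, each pair contributing a product of two
     nonpositive entries\<close>
  define F where "F = {t\<in>S. \<sigma> t = t}"
  have fin: "finite F" "finite N0" "finite N1" using \<open>finite S\<close> by (auto simp: F_def N0_def N1_def)
  have S: "S = F \<union> (N0 \<union> N1)" and "F \<inter> (N0 \<union> N1) = {}" "N0 \<inter> N1 = {}"
    by (auto simp: F_def N0_def N1_def)
  then have "(\<Prod>t\<in>S. X t (\<sigma> t))
      = (\<Prod>t\<in>F. X t (\<sigma> t)) * ((\<Prod>t\<in>N0. X t (\<sigma> t)) * (\<Prod>t\<in>N1. X t (\<sigma> t)))"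
    using fin unfolding S by (simp add: prod.union_disjoint)
  also have "(\<Prod>t\<in>N1. X t (\<sigma> t)) = (\<Prod>t\<in>N0. X (\<sigma> t) (\<sigma> (\<sigma> t)))"
    using prod.reindex_bij_betw[OF bij, of "\<lambda>t. X t (\<sigma> t)"] by simp
  finally have eq: "(\<Prod>t\<in>S. X t (\<sigma> t))
      = (\<Prod>t\<in>F. X t (\<sigma> t)) * (\<Prod>t\<in>N0. X t (\<sigma> t) * X (\<sigma> t) (\<sigma> (\<sigma> t)))"
    by (simp add: prod.distrib)
  have "0 \<le> X t (\<sigma> t) * X (\<sigma> t) (\<sigma> (\<sigma> t))" if "t \<in> N0" for t
    using that moved[of t] off_diag[of t "\<sigma> t"] off_diag[of "\<sigma> t" "\<sigma> (\<sigma> t)"]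
    by (auto simp: N0_def intro: mult_nonpos_nonpos)
  then show ?thesis unfolding eq by (simp add: F_def diag prod_nonneg)
qed

lemma sum_perms_fixing_or_swapping:
  fixes X :: "nat \<Rightarrow> nat \<Rightarrow> int"
  assumes "finite S" and "p \<in> S" and "U \<subseteq> S - {p}"
  shows "(\<Sum>\<sigma> \<in> perms_extending S {p} id \<union> (\<Union>u\<in>U. perms_extending S {p, u} (transpose p u)).
            \<Prod>t\<in>S. X t (\<sigma> t))
       = X p p * per (S - {p}) X + (\<Sum>u\<in>U. X p u * X u p * per (S - {p, u}) X)"
proof -
  let ?f = "\<lambda>\<sigma>. \<Prod>t\<in>S. X t (\<sigma> t)"
  have U: "finite U" "p \<notin> U" using assms finite_subset by auto
  have swap: "sum ?f (perms_extending S {p, u} (transpose p u)) = X p u * X u p * per (S - {p, u}) X"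
    if "u \<in> U" for u
  proof -
    have "u \<in> S" "u \<noteq> p" using that assms by auto
    moreover have "transpose p u permutes {p, u}" by (rule permutes_swap_id) auto
    ultimately show ?thesis
      using sum_perms_extending[OF \<open>finite S\<close>, of "{p, u}" "transpose p u" X] \<open>p \<in> S\<close> by simp
  qed
  have "sum ?f (\<Union>u\<in>U. perms_extending S {p, u} (transpose p u))
      = (\<Sum>u\<in>U. sum ?f (perms_extending S {p, u} (transpose p u)))"
  proof (rule sum.UNION_disjoint)
    show "\<forall>u\<in>U. finite (perms_extending S {p, u} (transpose p u))"
      using finite_perms_extending[OF \<open>finite S\<close>] by blast
    show "\<forall>u\<in>U. \<forall>u'\<in>U. u \<noteq> u' \<longrightarrow>
        perms_extending S {p, u} (transpose p u) \<inter> perms_extending S {p, u'} (transpose p u') = {}"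
      using U by (auto simp: perms_extending_def)
  qed (rule U(1))
  also have "\<dots> = (\<Sum>u\<in>U. X p u * X u p * per (S - {p, u}) X)"
    using swap by simp
  moreover have "sum ?f (perms_extending S {p} id) = X p p * per (S - {p}) X"
    using sum_perms_extending[OF \<open>finite S\<close>, of "{p}" id X] \<open>p \<in> S\<close> by simp
  moreover have "perms_extending S {p} id \<inter> (\<Union>u\<in>U. perms_extending S {p, u} (transpose p u)) = {}"
    using U by (auto simp: perms_extending_def)
  ultimately show ?thesis
    using \<open>finite S\<close> U by (simp add: sum.union_disjoint finite_perms_extending)
qed

lemma per_ge_row_expansion:
  fixes X :: "nat \<Rightarrow> nat \<Rightarrow> int"
  assumes "finite S" and "\<And>\<sigma>. \<sigma> permutes S \<Longrightarrow> 0 \<le> (\<Prod>t\<in>S. X t (\<sigma> t))"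
    and "p \<in> S" and "U \<subseteq> S - {p}"
  shows "X p p * per (S - {p}) X + (\<Sum>u\<in>U. X p u * X u p * per (S - {p, u}) X) \<le> per S X"
proof -
  have "perms_extending S {p} id \<union> (\<Union>u\<in>U. perms_extending S {p, u} (transpose p u))
        \<subseteq> {\<sigma>. \<sigma> permutes S}"
    using perms_extending_subset by blast
  from per_subset_sum_le[of S X, OF assms(1,2) this] show ?thesis
    unfolding sum_perms_fixing_or_swapping[OF assms(1,3,4)] .
qed

lemma per_pendant:
  fixes X :: "nat \<Rightarrow> nat \<Rightarrow> int"
  assumes "finite S" and "p \<in> S" "v \<in> S" "p \<noteq> v"
    and pendant: "\<And>b. b \<in> S \<Longrightarrow> b \<noteq> p \<Longrightarrow> b \<noteq> v \<Longrightarrow> X p b = 0 \<and> X b p = 0"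
  shows "per S X = X p p * per (S - {p}) X + X p v * X v p * per (S - {p, v}) X"
proof -
  let ?f = "\<lambda>\<sigma>. \<Prod>t\<in>S. X t (\<sigma> t)"
  let ?P = "perms_extending S {p} id \<union> (\<Union>u\<in>{v}. perms_extending S {p, u} (transpose p u))"
  have "?f \<sigma> = 0" if "\<sigma> permutes S" "\<sigma> \<notin> ?P" for \<sigma>
  proof -
    have "\<sigma> p \<in> S" "\<sigma> p \<noteq> p" using that \<open>p \<in> S\<close> permutes_in_image[OF that(1)]
      by (auto simp: perms_extending_def)
    show ?thesis
    proof (cases "\<sigma> p = v")
      case False
      then show ?thesis using pendant \<open>\<sigma> p \<in> S\<close> \<open>\<sigma> p \<noteq> p\<close> \<open>finite S\<close> \<open>p \<in> S\<close>
        by (metis prod_zero_iff)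
    next
      case True
      \<comment> \<open>then \<open>\<sigma> v \<noteq> p\<close>, so the preimage of \<open>p\<close> is a third vertex, whose entry towards \<open>p\<close> vanishes\<close>
      define q where "q = inv \<sigma> p"
      have "\<sigma> q = p" "q \<in> S"
        using permutes_inverses[OF that(1)] permutes_in_image[OF permutes_inv[OF that(1)]] \<open>p \<in> S\<close>
        by (auto simp: q_def)
      moreover have "q \<noteq> p" "q \<noteq> v" using True that \<open>\<sigma> q = p\<close> \<open>p \<noteq> v\<close>
        by (auto simp: perms_extending_def)
      ultimately show ?thesis using pendant \<open>finite S\<close> by (metis prod_zero_iff)
    qed
  qed
  then have "per S X = sum ?f ?P"
    unfolding per_def
    by (intro sum.mono_neutral_right finite_permutations \<open>finite S\<close>)
      (auto simp: perms_extending_def)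
  then show ?thesis
    using sum_perms_fixing_or_swapping[OF \<open>finite S\<close> \<open>p \<in> S\<close>, of "{v}" X] assms(3,4) by simp
qed

lemma prod_perm_inv_symmetric:
  fixes X :: "nat \<Rightarrow> nat \<Rightarrow> int"
  assumes \<sigma>: "\<sigma> permutes S" and sym: "\<And>a b. X a b = X b a"
  shows "(\<Prod>t\<in>S. X t (inv \<sigma> t)) = (\<Prod>t\<in>S. X t (\<sigma> t))"
proof -
  have "(\<Prod>t\<in>S. X t (inv \<sigma> t)) = (\<Prod>s\<in>S. X (\<sigma> s) (inv \<sigma> (\<sigma> s)))"
    using prod.reindex_bij_betw[OF permutes_imp_bij[OF \<sigma>], of "\<lambda>t. X t (inv \<sigma> t)"] by simp
  also have "\<dots> = (\<Prod>s\<in>S. X s (\<sigma> s))"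
    using permutes_inverses[OF \<sigma>] sym by simp
  finally show ?thesis .
qed

text \<open>This is what inserting the edge \<open>ab\<close> does to a Laplacian. The last sum collects the
  permutations with a cycle of length at least three through \<open>b \<mapsto> a\<close>; those through
  \<open>a \<mapsto> b\<close> contribute the same, by symmetry.\<close>

lemma per_insert_edge:
  fixes X Y :: "nat \<Rightarrow> nat \<Rightarrow> int"
  assumes "finite S" and "a \<in> S" "b \<in> S" "a \<noteq> b"
    and same: "\<And>x y. x \<in> S \<Longrightarrow> y \<in> S \<Longrightarrow> {x, y} \<noteq> {a, b} \<Longrightarrow> (x, y) \<noteq> (a, a) \<Longrightarrow> Y x y = X x y"
    and "Y a a = X a a + 1" "X a b = 0" "X b a = 0" "Y a b = -1" "Y b a = -1"
    and sym: "\<And>x y. Y x y = Y y x"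
  shows "per S Y = per S X + per (S - {a}) X + per (S - {a, b}) X
           + 2 * (\<Sum>\<sigma> | \<sigma> permutes S \<and> \<sigma> b = a \<and> \<sigma> a \<noteq> b. \<Prod>t\<in>S. Y t (\<sigma> t))"
proof -
  define Local where
    "Local = perms_extending S {a} id \<union> (\<Union>u\<in>{b}. perms_extending S {a, u} (transpose a u))"
  define Enter where "Enter = {\<sigma>. \<sigma> permutes S \<and> \<sigma> b = a \<and> \<sigma> a \<noteq> b}"
  define Leave where "Leave = {\<sigma>. \<sigma> permutes S \<and> \<sigma> a = b \<and> \<sigma> b \<noteq> a}"
  define Rest where "Rest = {\<sigma>. \<sigma> permutes S \<and> \<sigma> a \<noteq> a \<and> \<sigma> a \<noteq> b \<and> \<sigma> b \<noteq> a}"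
  have parts: "per S Z = (\<Sum>\<sigma>\<in>Local. \<Prod>t\<in>S. Z t (\<sigma> t)) + (\<Sum>\<sigma>\<in>Enter. \<Prod>t\<in>S. Z t (\<sigma> t))
      + (\<Sum>\<sigma>\<in>Leave. \<Prod>t\<in>S. Z t (\<sigma> t)) + (\<Sum>\<sigma>\<in>Rest. \<Prod>t\<in>S. Z t (\<sigma> t))" for Z
  proof -
    have "{\<sigma>. \<sigma> permutes S} = Local \<union> Enter \<union> Leave \<union> Rest"
      using \<open>a \<noteq> b\<close> by (auto simp: Local_def Enter_def Leave_def Rest_def perms_extending_def)
    moreover have "finite Local" "finite Enter" "finite Leave" "finite Rest"
      using finite_subset[OF _ finite_permutations[OF \<open>finite S\<close>]] \<open>finite S\<close>
      by (auto simp: Local_def Enter_def Leave_def Rest_def finite_perms_extending)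
    moreover have "Local \<inter> Enter = {}" "(Local \<union> Enter) \<inter> Leave = {}"
      "(Local \<union> Enter \<union> Leave) \<inter> Rest = {}"
      using \<open>a \<noteq> b\<close> by (auto simp: Local_def Enter_def Leave_def Rest_def perms_extending_def)
        (metis permutes_inverses(2))
    ultimately show ?thesis by (simp add: per_def sum.union_disjoint)
  qed
  have S_minus: "per (S - {a}) Y = per (S - {a}) X" "per (S - {a, b}) Y = per (S - {a, b}) X"
    using same by (auto intro!: per_cong simp: doubleton_eq_iff)
  have "(\<Sum>\<sigma>\<in>Local. \<Prod>t\<in>S. Y t (\<sigma> t))
      = (\<Sum>\<sigma>\<in>Local. \<Prod>t\<in>S. X t (\<sigma> t)) + per (S - {a}) X + per (S - {a, b}) X"
    using sum_perms_fixing_or_swapping[OF \<open>finite S\<close> \<open>a \<in> S\<close>, of "{b}"] assms(3,4,6-10) S_minus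
    unfolding Local_def by (simp add: algebra_simps)
  moreover have "(\<Sum>\<sigma>\<in>Enter. \<Prod>t\<in>S. X t (\<sigma> t)) = 0" "(\<Sum>\<sigma>\<in>Leave. \<Prod>t\<in>S. X t (\<sigma> t)) = 0"
    using \<open>finite S\<close> \<open>a \<in> S\<close> \<open>b \<in> S\<close> assms(7,8)
    by (auto simp: Enter_def Leave_def intro!: sum.neutral)
  moreover have "(\<Sum>\<sigma>\<in>Rest. \<Prod>t\<in>S. Y t (\<sigma> t)) = (\<Sum>\<sigma>\<in>Rest. \<Prod>t\<in>S. X t (\<sigma> t))"
  proof (intro sum.cong refl prod.cong)
    fix \<sigma> t assume "\<sigma> \<in> Rest" "t \<in> S"
    then have "\<sigma> permutes S" "\<sigma> a \<noteq> a" "\<sigma> a \<noteq> b" "\<sigma> b \<noteq> a" by (auto simp: Rest_def)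
    then show "Y t (\<sigma> t) = X t (\<sigma> t)"
      using same[of t "\<sigma> t"] permutes_in_image[of \<sigma> S t] \<open>t \<in> S\<close> by (auto simp: doubleton_eq_iff)
  qed
  moreover have "(\<Sum>\<sigma>\<in>Leave. \<Prod>t\<in>S. Y t (\<sigma> t)) = (\<Sum>\<sigma>\<in>Enter. \<Prod>t\<in>S. Y t (\<sigma> t))"
  proof (rule sum.reindex_bij_witness[where i = inv and j = inv])
    fix \<sigma> assume "\<sigma> \<in> Enter"
    then show "inv (inv \<sigma>) = \<sigma>" "inv \<sigma> \<in> Leave"
      by (auto simp: Enter_def Leave_def permutes_inv_inv permutes_inv permutes_inv_eq)
  next
    fix \<sigma> assume "\<sigma> \<in> Leave"
    then show "inv (inv \<sigma>) = \<sigma>" "inv \<sigma> \<in> Enter"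
      by (auto simp: Enter_def Leave_def permutes_inv_inv permutes_inv permutes_inv_eq)
    show "(\<Prod>t\<in>S. Y t (inv \<sigma> t)) = (\<Prod>t\<in>S. Y t (\<sigma> t))"
      using prod_perm_inv_symmetric[where X = Y, OF _ sym] \<open>\<sigma> \<in> Leave\<close> by (simp add: Leave_def)
  qed
  ultimately show ?thesis
    unfolding parts[of X] parts[of Y] Enter_def by simp
qed

section \<open>Permutations with nonvanishing terms along a cycle\<close>

definition nbrs :: "('a \<Rightarrow> 'a \<Rightarrow> 'b::zero) \<Rightarrow> 'a set \<Rightarrow> 'a \<Rightarrow> 'a set" where
  "nbrs X S a = {b \<in> S. b \<noteq> a \<and> X a b \<noteq> 0}"

lemma perm_forced_step:
  fixes X :: "'a \<Rightarrow> 'a \<Rightarrow> 'b::zero"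
  assumes \<sigma>: "\<sigma> permutes S" and nz: "\<And>t. t \<in> S \<Longrightarrow> X t (\<sigma> t) \<noteq> 0"
    and "b \<in> S" "\<sigma> a = b" "a \<noteq> b" "\<sigma> b \<noteq> a"
    and nbrs_b: "nbrs X S b \<subseteq> {a, c} \<union> {d. nbrs X S d \<subseteq> {b}}"
  shows "\<sigma> b = c"
proof -
  have inj: "\<sigma> x = \<sigma> y \<longleftrightarrow> x = y" for x y using permutes_inj[OF \<sigma>] by (simp add: inj_eq)
  have moved: "\<sigma> t \<in> nbrs X S t" if "t \<in> S" "\<sigma> t \<noteq> t" for t
    using that nz permutes_in_image[OF \<sigma>] by (simp add: nbrs_def)
  have "\<sigma> b \<noteq> b" using inj[of b a] assms(4,5) by auto
  then have "\<sigma> b = c \<or> nbrs X S (\<sigma> b) \<subseteq> {b}"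
    using moved[OF \<open>b \<in> S\<close>] nbrs_b \<open>\<sigma> b \<noteq> a\<close> by auto
  moreover
  \<comment> \<open>a leaf \<open>d = \<sigma> b\<close> would have to be mapped back to \<open>b = \<sigma> a\<close>, forcing \<open>d = a\<close>\<close>
  have False if leaf: "nbrs X S (\<sigma> b) \<subseteq> {b}"
  proof -
    have "\<sigma> (\<sigma> b) \<noteq> \<sigma> b" using inj \<open>\<sigma> b \<noteq> b\<close> by simp
    then have "\<sigma> (\<sigma> b) = \<sigma> a"
      using moved[of "\<sigma> b"] leaf permutes_in_image[OF \<sigma>] \<open>b \<in> S\<close> assms(4) by auto
    then show False using inj \<open>\<sigma> b \<noteq> a\<close> by simp
  qed
  ultimately show ?thesis by blast
qed

lemma cycle_of_list_nth:
  assumes "distinct cs" and "l < length cs"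
  shows "cycle_of_list cs (cs ! l) = cs ! (Suc l mod length cs)"
  using arg_cong[OF cyclic_rotation[OF assms(1), of 1], of "\<lambda>xs. xs ! l"] assms(2)
  by (simp add: nth_rotate1)

lemma perm_follows_cycle:
  fixes X :: "'a \<Rightarrow> 'a \<Rightarrow> 'b::zero"
  assumes \<sigma>: "\<sigma> permutes S" and nz: "\<And>t. t \<in> S \<Longrightarrow> X t (\<sigma> t) \<noteq> 0"
    and cs: "distinct cs" "set cs \<subseteq> S" "2 < length cs"
    and start: "\<sigma> (cs ! 0) = cs ! 1" "\<sigma> (cs ! 1) \<noteq> cs ! 0"
    and nbrs_cs: "\<And>l. 0 < l \<Longrightarrow> l < length cs \<Longrightarrow>
      nbrs X S (cs ! l) \<subseteq> {cs ! (l - 1), cs ! (Suc l mod length cs)} \<union> {d. nbrs X S d \<subseteq> {cs ! l}}"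
  shows "\<forall>c\<in>set cs. \<sigma> c = cycle_of_list cs c"
proof -
  let ?n = "length cs"
  have inj: "\<sigma> x = \<sigma> y \<longleftrightarrow> x = y" for x y using permutes_inj[OF \<sigma>] by (simp add: inj_eq)
  have distinct_nth: "cs ! x = cs ! y \<longleftrightarrow> x = y" if "x < ?n" "y < ?n" for x y
    using cs(1) that by (simp add: nth_eq_iff_index_eq)
  have "\<sigma> (cs ! l) = cs ! (Suc l mod ?n)" if "l < ?n" for l
    using that
  proof (induction l rule: less_induct)
    case (less l)
    show ?case
    proof (cases l)
      case 0
      then show ?thesis using start cs(3) by simp
    next
      case (Suc m)
      have enters: "\<sigma> (cs ! m) = cs ! l" using less.IH[of m] Suc less.prems by simp
      have no_return: "\<sigma> (cs ! l) \<noteq> cs ! m"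
      proof (cases m)
        case 0
        then show ?thesis using start Suc by simp
      next
        case (Suc m')
        then have "\<sigma> (cs ! m') = cs ! m" using less.IH[of m'] \<open>l = Suc m\<close> less.prems by simp
        then show ?thesis
          using inj[of "cs ! l" "cs ! m'"] distinct_nth[of l m'] \<open>l = Suc m\<close> Suc less.prems by auto
      qed
      have "nbrs X S (cs ! l) \<subseteq> {cs ! m, cs ! (Suc l mod ?n)} \<union> {d. nbrs X S d \<subseteq> {cs ! l}}"
        using nbrs_cs[of l] Suc less.prems by simp
      moreover have "cs ! l \<in> S" "cs ! m \<noteq> cs ! l"
        using cs(2) less.prems Suc distinct_nth by auto
      ultimately show ?thesis
        using perm_forced_step[of \<sigma> S X "cs ! l" "cs ! m", OF \<sigma> nz _ enters _ no_return] by blast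
    qed
  qed
  then show ?thesis using cycle_of_list_nth[OF cs(1)] by (auto simp: in_set_conv_nth)
qed

lemma prod_around_cycle_of_list:
  assumes "distinct cs"
  shows "(\<Prod>c\<in>set cs. f c (cycle_of_list cs c))
       = (\<Prod>l<length cs. f (cs ! l) (cs ! (Suc l mod length cs)))"
  using prod.reindex_bij_betw[OF bij_betw_nth[OF assms refl refl],
      of "\<lambda>c. f c (cycle_of_list cs c)"]
  by (simp add: cycle_of_list_nth[OF assms])

section \<open>Laplacians\<close>

lemma laplacian_eq:
  assumes edge: "\<And>a b. {a, b} \<in> E \<longleftrightarrow> R a b" and doubletons: "\<forall>e\<in>E. \<exists>x y. x \<noteq> y \<and> e = {x, y}"
  shows "laplacian E a b
       = (if a = b then int (card {c. c \<noteq> a \<and> R a c}) else if R a b then -1 else 0)"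
proof -
  have "{e\<in>E. a \<in> e} = (\<lambda>c. {a, c}) ` {c. c \<noteq> a \<and> R a c}"
  proof (intro equalityI subsetI)
    fix e assume e: "e \<in> {e\<in>E. a \<in> e}"
    then obtain x y where "x \<noteq> y" "e = {x, y}" using doubletons by blast
    then obtain c where "e = {a, c}" "c \<noteq> a" using e by (cases "a = x") (auto simp: insert_commute)
    then show "e \<in> (\<lambda>c. {a, c}) ` {c. c \<noteq> a \<and> R a c}" using edge e by auto
  qed (use edge in auto)
  moreover have "inj_on (\<lambda>c. {a, c}) {c. c \<noteq> a \<and> R a c}"
    by (auto simp: inj_on_def doubleton_eq_iff)
  ultimately show ?thesis by (cases "a = b") (simp_all add: laplacian_def card_image edge)
qed

lemma laplacian_commute: "laplacian E a b = laplacian E b a"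
  by (simp add: laplacian_def insert_commute)

lemma prod_laplacian_nonneg_if_bipartite:
  fixes colour :: "nat \<Rightarrow> bool"
  assumes "finite S" and "\<sigma> permutes S"
    and bipartite: "\<And>a b. {a, b} \<in> E \<Longrightarrow> a \<noteq> b \<Longrightarrow> colour a \<noteq> colour b"
  shows "0 \<le> (\<Prod>t\<in>S. laplacian E t (\<sigma> t))"
  using assms(1,2) by (rule prod_perm_nonneg_if_bipartite[where colour = colour])
    (use bipartite in \<open>auto simp: laplacian_def split: if_splits\<close>)

section \<open>The graphs \<open>G\<close> and \<open>G'\<close>\<close>

locale cycle_two_stars =
  fixes k i j ni nj :: nat
  assumes k: "3 \<le> k" and i: "4 < i" and ij: "i < j" and j: "j \<le> 2 * k"
begin

definition arc :: "nat \<Rightarrow> nat \<Rightarrow> bool" where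
  "arc x y \<longleftrightarrow> (1 \<le> x \<and> x < 2 * k \<and> y = x + 1) \<or> (x = 2 * k \<and> y = 1)
     \<or> (x = i \<and> 2 * k < y \<and> y \<le> 2 * k + ni) \<or> (x = j \<and> 2 * k + ni < y \<and> y \<le> 2 * k + ni + nj)"

definition adj :: "nat \<Rightarrow> nat \<Rightarrow> bool" where
  "adj a b \<longleftrightarrow> arc a b \<or> arc b a"

definition adj' :: "nat \<Rightarrow> nat \<Rightarrow> bool" where
  "adj' a b \<longleftrightarrow> {a, b} = {1, 4} \<or> (adj a b \<and> {a, b} \<noteq> {1, 2})"

abbreviation "E \<equiv> G_edges k i j ni nj"
abbreviation "E' \<equiv> insert {1, 4} (G_edges k i j ni nj - {{1, 2}})"
abbreviation "L \<equiv> laplacian E"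
abbreviation "L' \<equiv> laplacian E'"
abbreviation "V \<equiv> {1 .. 2 * k + ni + nj}"
abbreviation "W \<equiv> V - {2, 3}"

lemmas bounds = k i ij j

lemma G_edges_eq: "E = {{x, y} | x y. arc x y}"
proof
  show "E \<subseteq> {{x, y} | x y. arc x y}"
    unfolding G_edges_def cycle_edges_def arc_def by (auto; force)
  have "{x, y} \<in> E" if "arc x y" for x y
    using that unfolding arc_def
  proof (elim disjE conjE)
    assume "x = i" "2 * k < y" "y \<le> 2 * k + ni"
    then show ?thesis unfolding G_edges_def by (intro UnI1 UnI2 CollectI exI[of _ "y - 2 * k"]) auto
  next
    assume "x = j" "2 * k + ni < y" "y \<le> 2 * k + ni + nj"
    then show ?thesis unfolding G_edges_def by (intro UnI2 CollectI exI[of _ "y - 2 * k - ni"]) auto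
  qed (auto simp: G_edges_def cycle_edges_def)
  then show "{{x, y} | x y. arc x y} \<subseteq> E" by blast
qed

lemma arc_neq: "arc x y \<Longrightarrow> x \<noteq> y"
  using bounds unfolding arc_def by auto

lemma edge_iff: "{a, b} \<in> E \<longleftrightarrow> adj a b"
  unfolding G_edges_eq adj_def by (auto simp: doubleton_eq_iff)

lemma edge'_iff: "{a, b} \<in> E' \<longleftrightarrow> adj' a b"
  unfolding adj'_def by (auto simp: edge_iff)

lemma E_doubletons: "\<forall>e\<in>E. \<exists>x y. x \<noteq> y \<and> e = {x, y}"
  unfolding G_edges_eq using arc_neq by blast

lemma E'_doubletons: "\<forall>e\<in>E'. \<exists>x y. x \<noteq> y \<and> e = {x, y}"
proof
  fix e assume "e \<in> E'"
  then consider "e = {1, 4}" | "e \<in> E" by blast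
  then show "\<exists>x y. x \<noteq> y \<and> e = {x, y}"
  proof cases
    case 1
    then show ?thesis by (intro exI[of _ "1::nat"] exI[of _ "4::nat"]) simp
  qed (use E_doubletons in blast)
qed

lemma L_eq:
  "L a b = (if a = b then int (card {c. c \<noteq> a \<and> adj a c}) else if adj a b then -1 else 0)"
  by (rule laplacian_eq[OF edge_iff E_doubletons])

lemma L'_eq:
  "L' a b = (if a = b then int (card {c. c \<noteq> a \<and> adj' a c}) else if adj' a b then -1 else 0)"
  by (rule laplacian_eq[OF edge'_iff E'_doubletons])

lemma L_entries:
  "L 2 2 = 2" "L 3 3 = 2" "L 4 4 = 2" "L 1 4 = 0" "L 4 1 = 0"
  "L 1 2 = -1" "L 2 1 = -1" "L 2 3 = -1" "L 3 2 = -1"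
  "L 3 4 = -1" "L 4 3 = -1" "L 4 5 = -1" "L 5 4 = -1"
proof -
  have "{c. c \<noteq> 2 \<and> adj 2 c} = {1, 3}" "{c. c \<noteq> 3 \<and> adj 3 c} = {2, 4}"
    "{c. c \<noteq> 4 \<and> adj 4 c} = {3, 5}"
    using bounds unfolding adj_def arc_def by auto
  then show "L 2 2 = 2" "L 3 3 = 2" "L 4 4 = 2" by (simp_all add: L_eq)
  show "L 1 4 = 0" "L 4 1 = 0"
    "L 1 2 = -1" "L 2 1 = -1" "L 2 3 = -1" "L 3 2 = -1"
    "L 3 4 = -1" "L 4 3 = -1" "L 4 5 = -1" "L 5 4 = -1"
    using bounds by (simp_all add: L_eq adj_def arc_def)
qed

lemma L'_entries:
  "L' 2 2 = 1" "L' 3 3 = 2" "L' 4 4 = 3"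
  "L' 2 3 = -1" "L' 3 2 = -1" "L' 3 4 = -1" "L' 4 3 = -1" "L' 1 4 = -1" "L' 4 1 = -1"
proof -
  have "{c. c \<noteq> 2 \<and> adj' 2 c} = {3}" "{c. c \<noteq> 3 \<and> adj' 3 c} = {2, 4}"
    "{c. c \<noteq> 4 \<and> adj' 4 c} = {1, 3, 5}"
    using bounds unfolding adj'_def adj_def arc_def by (auto simp: doubleton_eq_iff)
  then show "L' 2 2 = 1" "L' 3 3 = 2" "L' 4 4 = 3" unfolding L'_eq by simp_all
  show "L' 2 3 = -1" "L' 3 2 = -1" "L' 3 4 = -1" "L' 4 3 = -1" "L' 1 4 = -1" "L' 4 1 = -1"
    unfolding L'_eq using bounds by (simp_all add: adj'_def adj_def arc_def doubleton_eq_iff)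
qed

lemma L'_eq_L:
  assumes "a \<in> W" "b \<in> W" "{a, b} \<noteq> {1, 4}" "(a, b) \<noteq> (4, 4)"
  shows "L' a b = L a b"
proof (cases "a = b")
  case True
  have "card {c. c \<noteq> a \<and> adj' a c} = card {c. c \<noteq> a \<and> adj a c}"
  proof (cases "a = 1")
    case True
    have "{c. c \<noteq> 1 \<and> adj' 1 c} = {4, 2 * k}" "{c. c \<noteq> 1 \<and> adj 1 c} = {2, 2 * k}"
      using bounds unfolding adj'_def adj_def arc_def by (auto simp: doubleton_eq_iff)
    then show ?thesis using True bounds by simp
  next
    case False
    then show ?thesis
      using assms \<open>a = b\<close> by (auto simp: adj'_def doubleton_eq_iff intro: arg_cong[where f = card])
  qed
  then show ?thesis using True unfolding L_eq L'_eq by simp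
next
  case False
  then show ?thesis using assms unfolding L_eq L'_eq by (auto simp: adj'_def doubleton_eq_iff)
qed

definition colour :: "nat \<Rightarrow> bool" where
  "colour a = (if a \<le> 2 * k then even a else if a \<le> 2 * k + ni then odd i else odd j)"

lemma L_perm_term_nonneg: "finite S \<Longrightarrow> \<sigma> permutes S \<Longrightarrow> 0 \<le> (\<Prod>t\<in>S. L t (\<sigma> t))"
proof (rule prod_laplacian_nonneg_if_bipartite[where colour = colour])
  have "colour x \<noteq> colour y" if "arc x y" for x y
    using that bounds unfolding arc_def colour_def by auto
  then show "\<And>a b. {a, b} \<in> E \<Longrightarrow> a \<noteq> b \<Longrightarrow> colour a \<noteq> colour b"
    unfolding edge_iff adj_def by metis
qed

lemma L_diag_ge_1:
  assumes "t \<in> V"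
  shows "1 \<le> L t t"
proof -
  consider "t = 1" | "1 < t" "t \<le> 2 * k" | "2 * k < t" "t \<le> 2 * k + ni" | "2 * k + ni < t"
    using assms by fastforce
  then have "\<exists>c. adj t c"
  proof cases
    case 1
    then show ?thesis using bounds unfolding adj_def arc_def by (intro exI[of _ 2]) simp
  next
    case 2
    then have "arc (t - 1) t" unfolding arc_def by auto
    then show ?thesis unfolding adj_def by blast
  next
    case 3
    then show ?thesis unfolding adj_def arc_def by (intro exI[of _ i]) simp
  next
    case 4
    then show ?thesis using assms unfolding adj_def arc_def by (intro exI[of _ j]) simp
  qed
  then obtain c where "c \<noteq> t" "adj t c"
    using arc_neq unfolding adj_def by metis
  moreover have "finite {c. c \<noteq> t \<and> adj t c}"
    by (rule finite_subset[of _ "{..2 * k + ni + nj}"]) (use bounds in \<open>auto simp: adj_def arc_def\<close>)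
  ultimately show ?thesis by (simp add: L_eq card_gt_0_iff Suc_le_eq) blast
qed

lemma per_L_ge_1:
  assumes "S \<subseteq> V"
  shows "1 \<le> per S L"
proof -
  have "1 \<le> (\<Prod>t\<in>S. L t t)" using assms L_diag_ge_1 by (intro prod_ge_1) auto
  also have "\<dots> \<le> per S L"
    using assms finite_subset L_perm_term_nonneg by (intro prod_diag_le_per) auto
  finally show ?thesis .
qed

lemma per_V_L_ge:
  "5 * per W L + 2 * per (W - {4}) L + 2 * per (W - {1}) L + per (W - {1, 4}) L \<le> per V L"
proof -
  have nonneg: "\<And>S \<sigma>. S \<subseteq> V \<Longrightarrow> \<sigma> permutes S \<Longrightarrow> 0 \<le> (\<Prod>t\<in>S. L t (\<sigma> t))"
    using L_perm_term_nonneg finite_subset by blast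
  have "L 2 2 * per (V - {2}) L + (\<Sum>u\<in>{1, 3}. L 2 u * L u 2 * per (V - {2, u}) L) \<le> per V L"
    using bounds by (intro per_ge_row_expansion nonneg) auto
  moreover have "L 3 3 * per (V - {2} - {3}) L + (\<Sum>u\<in>{4}. L 3 u * L u 3 * per (V - {2} - {3, u}) L)
      \<le> per (V - {2}) L"
    using bounds by (intro per_ge_row_expansion nonneg) auto
  moreover have "L 3 3 * per (V - {1, 2} - {3}) L
      + (\<Sum>u\<in>{4}. L 3 u * L u 3 * per (V - {1, 2} - {3, u}) L) \<le> per (V - {1, 2}) L"
    using bounds by (intro per_ge_row_expansion nonneg) auto
  moreover have "V - {2} - {3} = W" "V - {2, 3} = W" "V - {2} - {3, 4} = W - {4}"
    "V - {1, 2} - {3} = W - {1}" "V - {1, 2} - {3, 4} = W - {1, 4}" "V - {2, 1} = V - {1, 2}"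
    by auto
  ultimately show ?thesis using L_entries by (simp add: insert_commute)
qed

lemma per_ge_expansion_at_4:
  assumes "S \<subseteq> W" "4 \<in> S" "5 \<in> S"
  shows "2 * per (S - {4}) L + per (S - {4, 5}) L \<le> per S L"
proof -
  have "L 4 4 * per (S - {4}) L + (\<Sum>u\<in>{5}. L 4 u * L u 4 * per (S - {4, u}) L) \<le> per S L"
    using assms finite_subset[of S V] L_perm_term_nonneg by (intro per_ge_row_expansion) auto
  then show ?thesis using L_entries by simp
qed

lemma per_V_L'_expand_pendants: "per V L' = 3 * per W L' + per (W - {4}) L'"
proof -
  have "per V L' = L' 2 2 * per (V - {2}) L' + L' 2 3 * L' 3 2 * per (V - {2, 3}) L'"
  proof (rule per_pendant)
    fix b assume "b \<in> V" "b \<noteq> 2" "b \<noteq> 3"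
    then show "L' 2 b = 0 \<and> L' b 2 = 0"
      using bounds unfolding L'_eq adj'_def adj_def arc_def by (auto simp: doubleton_eq_iff)
  qed (use bounds in auto)
  moreover have "per (V - {2}) L'
      = L' 3 3 * per (V - {2} - {3}) L' + L' 3 4 * L' 4 3 * per (V - {2} - {3, 4}) L'"
  proof (rule per_pendant)
    fix b assume "b \<in> V - {2}" "b \<noteq> 3" "b \<noteq> 4"
    then show "L' 3 b = 0 \<and> L' b 3 = 0"
      using bounds unfolding L'_eq adj'_def adj_def arc_def by (auto simp: doubleton_eq_iff)
  qed (use bounds in auto)
  moreover have "V - {2} - {3} = W" "V - {2} - {3, 4} = W - {4}" by auto
  ultimately show ?thesis using L'_entries by simp
qed

definition cyc :: "nat list" where
  "cyc = 1 # [4..<2 * k + 1]"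

lemma cyc_props:
  "distinct cyc" "set cyc = insert 1 {4..2 * k}" "length cyc = 2 * k - 2" "cyc ! 0 = 1"
  "\<And>l. 0 < l \<Longrightarrow> l < length cyc \<Longrightarrow> cyc ! l = l + 3"
  using bounds by (auto simp: cyc_def nth_Cons simp del: upt_Suc split: nat.split)

lemma nbrs_L': "nbrs L' W a = {c \<in> W. c \<noteq> a \<and> adj' a c}"
  unfolding nbrs_def L'_eq by auto

lemma nbrs_pendant:
  assumes "d \<in> W" "2 * k < d"
  shows "nbrs L' W d \<subseteq> {if d \<le> 2 * k + ni then i else j}"
  using assms bounds unfolding nbrs_L' adj'_def adj_def arc_def by (auto simp: doubleton_eq_iff)

lemma nbrs_cyc_vertex:
  assumes "4 \<le> t" "t \<le> 2 * k"
  shows "nbrs L' W t \<subseteq> {if t = 4 then 1 else t - 1, if t = 2 * k then 1 else t + 1}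
    \<union> {d. nbrs L' W d \<subseteq> {t}}"
proof
  fix c assume c: "c \<in> nbrs L' W t"
  show "c \<in> {if t = 4 then 1 else t - 1, if t = 2 * k then 1 else t + 1} \<union> {d. nbrs L' W d \<subseteq> {t}}"
  proof (cases "2 * k < c")
    case True
    then have "t = (if c \<le> 2 * k + ni then i else j)"
      using c assms bounds unfolding nbrs_L' adj'_def adj_def arc_def by (auto simp: doubleton_eq_iff)
    then show ?thesis using nbrs_pendant[of c] True c by (auto simp: nbrs_def)
  next
    case False
    have "c \<in> W" "c \<noteq> t" using c unfolding nbrs_L' by auto
    from c consider "{t, c} = {1, 4}" | "arc t c" | "arc c t"
      unfolding nbrs_L' adj'_def adj_def by blast
    then have "c = (if t = 4 then 1 else t - 1) \<or> c = (if t = 2 * k then 1 else t + 1)"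
    proof cases
      case 1
      then show ?thesis using assms by (auto simp: doubleton_eq_iff)
    next
      case 2
      then show ?thesis using False assms bounds unfolding arc_def by auto
    next
      case 3
      then have "t = c + 1" using False assms bounds unfolding arc_def by auto
      then show ?thesis using \<open>c \<in> W\<close> by auto
    qed
    then show ?thesis by blast
  qed
qed

lemma perm_follows_cyc:
  assumes \<sigma>: "\<sigma> permutes W" and "\<sigma> 1 = 4" "\<sigma> 4 \<noteq> 1"
    and nz: "\<And>t. t \<in> W \<Longrightarrow> L' t (\<sigma> t) \<noteq> 0"
  shows "\<sigma> \<in> perms_extending W (set cyc) (cycle_of_list cyc)"
proof -
  have "\<forall>c\<in>set cyc. \<sigma> c = cycle_of_list cyc c"
  proof (rule perm_follows_cycle[where X = L' and cs = cyc, OF \<sigma> nz])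
    show "distinct cyc" "set cyc \<subseteq> W" "2 < length cyc" using cyc_props bounds by auto
    show "\<sigma> (cyc ! 0) = cyc ! 1" "\<sigma> (cyc ! 1) \<noteq> cyc ! 0"
      using cyc_props assms(2,3) bounds by auto
    fix l assume l: "0 < l" "l < length cyc"
    have "cyc ! (l - 1) = (if l + 3 = 4 then 1 else l + 3 - 1)"
      using l cyc_props by (cases "l = 1") auto
    moreover have "cyc ! (Suc l mod length cyc) = (if l + 3 = 2 * k then 1 else l + 3 + 1)"
      using l cyc_props by (cases "Suc l = length cyc") auto
    ultimately show "nbrs L' W (cyc ! l)
        \<subseteq> {cyc ! (l - 1), cyc ! (Suc l mod length cyc)} \<union> {d. nbrs L' W d \<subseteq> {cyc ! l}}"
      using nbrs_cyc_vertex[of "l + 3"] l cyc_props by simp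
  qed
  then show ?thesis using \<sigma> by (simp add: perms_extending_def)
qed

lemma prod_around_cyc: "(\<Prod>c\<in>set cyc. L' c (cycle_of_list cyc c)) = 1"
proof -
  have "L' (cyc ! l) (cyc ! (Suc l mod length cyc)) = -1" if l: "l < length cyc" for l
  proof -
    consider "l = 0" | "0 < l" "Suc l < length cyc" | "0 < l" "Suc l = length cyc"
      using l by (metis Suc_lessI neq0_conv)
    then have "adj' (cyc ! l) (cyc ! (Suc l mod length cyc))"
    proof cases
      case 1
      have "Suc 0 mod length cyc = 1" using cyc_props(3) bounds by simp
      then show ?thesis using 1 cyc_props bounds by (simp add: adj'_def)
    next
      case 2
      then have "cyc ! l = l + 3" "cyc ! (Suc l mod length cyc) = l + 4" using cyc_props by auto
      moreover have "arc (l + 3) (l + 4)" using 2 cyc_props(3) unfolding arc_def by auto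
      ultimately show ?thesis by (simp add: adj'_def adj_def doubleton_eq_iff)
    next
      case 3
      then have "cyc ! l = 2 * k" "cyc ! (Suc l mod length cyc) = 1" using cyc_props by auto
      moreover have "arc (2 * k) 1" unfolding arc_def by simp
      ultimately show ?thesis using bounds by (simp add: adj'_def adj_def doubleton_eq_iff)
    qed
    moreover have "cyc ! l \<noteq> cyc ! (Suc l mod length cyc)"
    proof -
      have "Suc l mod length cyc \<noteq> l"
        using l cyc_props(3) bounds by (cases "Suc l = length cyc") auto
      moreover have "Suc l mod length cyc < length cyc" using l by (intro mod_less_divisor) linarith
      ultimately show ?thesis
        using cyc_props(1) l nth_eq_iff_index_eq[of cyc l "Suc l mod length cyc"] by auto
    qed
    ultimately show ?thesis unfolding L'_eq by simp
  qed
  then have "(\<Prod>c\<in>set cyc. L' c (cycle_of_list cyc c)) = (-1) ^ length cyc"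
    by (simp add: prod_around_cycle_of_list[OF cyc_props(1)])
  also have "\<dots> = 1"
    using cyc_props(3) by (simp add: right_diff_distrib' flip: mult_2 power_mult)
  finally show ?thesis .
qed

lemma per_W_minus_cyc_L': "per (W - set cyc) L' = 1"
proof -
  have pendant: "2 * k < a" if "a \<in> W - set cyc" for a
    using that cyc_props(2) by auto
  have "per (W - set cyc) L' = (\<Prod>a\<in>W - set cyc. L' a a)"
  proof (rule per_diagonal)
    fix a b assume "a \<in> W - set cyc" "b \<in> W - set cyc" "a \<noteq> b"
    then show "L' a b = 0"
      using pendant[of a] pendant[of b] bounds unfolding L'_eq adj'_def adj_def arc_def
      by (auto simp: doubleton_eq_iff)
  qed simp
  also have "\<dots> = 1"
  proof (rule prod.neutral, rule ballI)
    fix a assume a: "a \<in> W - set cyc"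
    then have "{c. c \<noteq> a \<and> adj' a c} = {if a \<le> 2 * k + ni then i else j}"
      using pendant[OF a] bounds unfolding adj'_def adj_def arc_def by (auto simp: doubleton_eq_iff)
    then show "L' a a = 1" unfolding L'_eq by simp
  qed
  finally show ?thesis .
qed

lemma sum_perms_through_new_edge:
  "(\<Sum>\<sigma> | \<sigma> permutes W \<and> \<sigma> 1 = 4 \<and> \<sigma> 4 \<noteq> 1. \<Prod>t\<in>W. L' t (\<sigma> t)) = 1"
proof -
  let ?f = "\<lambda>\<sigma>. \<Prod>t\<in>W. L' t (\<sigma> t)"
  let ?R = "perms_extending W (set cyc) (cycle_of_list cyc)"
  have cyc_W: "set cyc \<subseteq> W" using cyc_props(2) bounds by auto
  have "?R \<subseteq> {\<sigma>. \<sigma> permutes W \<and> \<sigma> 1 = 4 \<and> \<sigma> 4 \<noteq> 1}"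
  proof
    fix \<sigma> assume "\<sigma> \<in> ?R"
    moreover have "cyc ! 0 = 1" "cyc ! 1 = 4" "cyc ! 2 = 5" "2 < length cyc" "cyc \<noteq> []"
      using cyc_props bounds by auto
    then have "cycle_of_list cyc 1 = 4" "cycle_of_list cyc 4 = 5"
      using cycle_of_list_nth[OF cyc_props(1), of 0] cycle_of_list_nth[OF cyc_props(1), of 1]
      by (auto simp: eval_nat_numeral)
    ultimately show "\<sigma> \<in> {\<sigma>. \<sigma> permutes W \<and> \<sigma> 1 = 4 \<and> \<sigma> 4 \<noteq> 1}"
      using cyc_props(2) bounds by (auto simp: perms_extending_def)
  qed
  moreover have "?f \<sigma> = 0" if "\<sigma> permutes W" "\<sigma> 1 = 4" "\<sigma> 4 \<noteq> 1" "\<sigma> \<notin> ?R" for \<sigma>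
    using perm_follows_cyc[OF that(1-3)] that(4)
    by (meson finite_Diff finite_atLeastAtMost prod_zero_iff)
  ultimately have "sum ?f {\<sigma>. \<sigma> permutes W \<and> \<sigma> 1 = 4 \<and> \<sigma> 4 \<noteq> 1} = sum ?f ?R"
    by (intro sum.mono_neutral_right) (auto intro: finite_subset[OF _ finite_permutations[of W]])
  also have "\<dots> = (\<Prod>c\<in>set cyc. L' c (cycle_of_list cyc c)) * per (W - set cyc) L'"
    by (rule sum_perms_extending[OF _ cyc_W cycle_permutes]) simp
  finally show ?thesis using prod_around_cyc per_W_minus_cyc_L' by simp
qed

lemma per_W_L'_eq: "per W L' = per W L + per (W - {4}) L + per (W - {1, 4}) L + 2"
proof -
  have "per W L' = per W L + per (W - {4}) L + per (W - {4, 1}) L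
      + 2 * (\<Sum>\<sigma> | \<sigma> permutes W \<and> \<sigma> 1 = 4 \<and> \<sigma> 4 \<noteq> 1. \<Prod>t\<in>W. L' t (\<sigma> t))"
  proof (rule per_insert_edge)
    show "\<And>x y. x \<in> W \<Longrightarrow> y \<in> W \<Longrightarrow> {x, y} \<noteq> {4, 1} \<Longrightarrow> (x, y) \<noteq> (4, 4) \<Longrightarrow> L' x y = L x y"
      using L'_eq_L by (simp add: insert_commute)
  qed (use bounds L_entries L'_entries laplacian_commute in auto)
  then show ?thesis using sum_perms_through_new_edge by (simp add: insert_commute)
qed

lemma per_V_L'_eq: "per V L' = 3 * per W L + 4 * per (W - {4}) L + 3 * per (W - {1, 4}) L + 6"
proof -
  have "per (W - {4}) L' = per (W - {4}) L"
    using L'_eq_L by (intro per_cong) (auto simp: doubleton_eq_iff)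
  then show ?thesis using per_V_L'_expand_pendants per_W_L'_eq by simp
qed

end

theorem theorem2p6:
  fixes k i j ni nj :: nat
  assumes "k \<ge> 3" and "4 < i" and "i < j" and "j \<le> 2 * k"
  shows "per (G_vertices k ni nj) (laplacian (G_edges k i j ni nj))
       > per (G_vertices k ni nj)
             (laplacian (insert {1, 4} (G_edges k i j ni nj - {{1, 2}})))"
proof -
  interpret cycle_two_stars k i j ni nj using assms by unfold_locales
  have "2 * per (W - {4}) L + per (W - {4, 5}) L \<le> per W L"
    using assms by (intro per_ge_expansion_at_4) auto
  moreover have "2 * per (W - {1, 4}) L + per (W - {1, 4, 5}) L \<le> per (W - {1}) L"
  proof -
    have "W - {1} - {4} = W - {1, 4}" "W - {1} - {4, 5} = W - {1, 4, 5}" by auto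
    then show ?thesis using per_ge_expansion_at_4[of "W - {1}"] assms by simp
  qed
  moreover have "1 \<le> per (W - {4}) L" "1 \<le> per (W - {4, 5}) L"
    "1 \<le> per (W - {1, 4}) L" "1 \<le> per (W - {1, 4, 5}) L"
    by (intro per_L_ge_1; auto)+
  ultimately show ?thesis
    using per_V_L_ge per_V_L'_eq unfolding G_vertices_def by linarith
qed

end
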